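(* Let $\mathbb{K}^r_{c,m}$ be an $r$-uniform star-hypergraph with $m\ge 2$ edges and centre of size $c$, where $1\le c<r$. Then $\lambda(\mathbb{K}^r_{c,m})=m(r-c)+2c-1$.
   Context: An $r$-uniform hypergraph (every edge has exactly $r$ vertices) is a star-hypergraph if there is a set $\mathcal{C}\subset V$, its centre, such that $e_i\cap e_j=\mathcal{C}$ for all distinct edges $e_i,e_j$; with $m$ edges and $|\mathcal{C}|=c$ it is denoted $\mathbb{K}^r_{c,m}$ (its vertex set is the union of its edges). An $L(2,1)$-colouring of a hypergraph $\mathbb{H}=(V,E)$ is a map $f:V\to\mathbb{Z}_{\ge 0}$ such that $|f(u)-f(v)|\ge 2$ whenever $u\ne v$ lie in a common edge, and $|f(u)-f(v)|\ge 1$ whenever there are edges $e_1\ni v$, $e_2\ni u$ with $(e_1\cap e_2)\setminus\{u,v\}\ne\emptyset$. Its span is $\max f-\min f$, and $\lambda(\mathbb{H})$ is the minimum span. *)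

theory Defs
  imports Main
begin

definition uniform_hypergraph :: "nat \<Rightarrow> 'a set \<Rightarrow> 'a set set \<Rightarrow> bool" where
  "uniform_hypergraph r V E \<longleftrightarrow> (\<forall>e\<in>E. e \<subseteq> V \<and> finite e \<and> card e = r)"

definition star_hypergraph :: "nat \<Rightarrow> nat \<Rightarrow> nat \<Rightarrow> 'a set \<Rightarrow> 'a set set \<Rightarrow> bool" where
  "star_hypergraph r c m V E \<longleftrightarrow>
     uniform_hypergraph r V E \<and> V = \<Union>E \<and> finite E \<and> card E = m \<and>
     (\<exists>C. card C = c \<and> finite C \<and> (\<forall>e1\<in>E. \<forall>e2\<in>E. e1 \<noteq> e2 \<longrightarrow> e1 \<inter> e2 = C))"

definition L21_colouring :: "'a set \<Rightarrow> 'a set set \<Rightarrow> ('a \<Rightarrow> nat) \<Rightarrow> bool" where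
  "L21_colouring V E f \<longleftrightarrow>
     (\<forall>u\<in>V. \<forall>v\<in>V. u \<noteq> v \<longrightarrow>
        ((\<exists>e\<in>E. u \<in> e \<and> v \<in> e) \<longrightarrow> \<bar>int (f u) - int (f v)\<bar> \<ge> 2) \<and>
        ((\<exists>e1\<in>E. \<exists>e2\<in>E. v \<in> e1 \<and> u \<in> e2 \<and> (e1 \<inter> e2) - {u, v} \<noteq> {})
            \<longrightarrow> \<bar>int (f u) - int (f v)\<bar> \<ge> 1))"

definition span :: "'a set \<Rightarrow> ('a \<Rightarrow> nat) \<Rightarrow> nat" where
  "span V f = Max (f ` V) - Min (f ` V)"

definition lambda_L21 :: "'a set \<Rightarrow> 'a set set \<Rightarrow> nat" where
  "lambda_L21 V E = (LEAST s. \<exists>f. L21_colouring V E f \<and> span V f = s)"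

end

theory Submission
  imports Defs
begin

text \<open>Every L(2,1)-colouring of a star is injective, and each centre colour lies at distance at
  least 2 from every other colour. Fixing a non-centre vertex w, the integer next to each centre
  colour on the side of f w is therefore an unused value inside the range of f; these values are
  distinct, so the range contains at least |V| + c integers, giving span \<ge> |V| + c - 1 =
  m(r - c) + 2c - 1. Conversely, colouring the j-th non-centre vertex of the i-th edge by
  j m + i and the centre by m(r - c) + 1, m(r - c) + 3, \<dots> attains this span.\<close>

lemma card_add_card_isolated_le:
  fixes S T :: "nat set"
  assumes S: "finite S" and TS: "T \<subseteq> S" and w: "w \<in> S" "w \<notin> T"
    and isolated: "\<And>t s. t \<in> T \<Longrightarrow> s \<in> S \<Longrightarrow> s \<noteq> t \<Longrightarrow> t + 2 \<le> s \<or> s + 2 \<le> t"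
  shows "card S + card T \<le> Suc (Max S) - Min S"
proof -
  define g where "g t = (if w < t then t - 1 else t + 1)" for t
  have g_notin: "g t \<notin> S" if t: "t \<in> T" for t
  proof
    assume "g t \<in> S"
    moreover have "g t \<noteq> t" by (auto simp: g_def)
    ultimately show False using isolated[OF t \<open>g t \<in> S\<close>] by (auto simp: g_def split: if_splits)
  qed
  have g_range: "g t \<in> {Min S..Max S}" if t: "t \<in> T" for t
  proof -
    have "Min S \<le> w" "w \<le> Max S" "Min S \<le> t" "t \<le> Max S" using S w t TS by auto
    moreover have "t \<noteq> w" using w t by blast
    ultimately show ?thesis by (auto simp: g_def)
  qed
  have "inj_on g T"
  proof (rule inj_onI)
    fix x y assume x: "x \<in> T" and y: "y \<in> T" and "g x = g y"
    moreover have "x \<noteq> w" "y \<noteq> w" using w x y by blast+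
    \<comment> \<open>on opposite sides of w, g x = g y would force g x = w\<close>
    moreover have "g x \<noteq> w" using g_notin[OF x] w by blast
    ultimately show "x = y" by (auto simp: g_def split: if_splits)
  qed
  have "finite T" using S TS by (rule finite_subset[rotated])
  moreover have "S \<inter> g ` T = {}" using g_notin by blast
  ultimately have "card S + card T = card (S \<union> g ` T)"
    using card_Un_disjoint[of S "g ` T"] card_image[OF \<open>inj_on g T\<close>] S by simp
  also have "\<dots> \<le> card {Min S..Max S}"
    using g_range S by (intro card_mono) auto
  finally show ?thesis by simp
qed

lemma L21_colouringI:
  assumes "inj_on f V"
    and "\<And>e u v. e \<in> E \<Longrightarrow> u \<in> e \<Longrightarrow> v \<in> e \<Longrightarrow> u \<noteq> v \<Longrightarrow> f u + 2 \<le> f v \<or> f v + 2 \<le> f u"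
  shows "L21_colouring V E f"
proof -
  have "1 \<le> \<bar>int (f u) - int (f v)\<bar>" if "u \<in> V" "v \<in> V" "u \<noteq> v" for u v
    using inj_onD[OF assms(1) _ that(1,2)] that(3) by fastforce
  moreover have "2 \<le> \<bar>int (f u) - int (f v)\<bar>" if "e \<in> E" "u \<in> e" "v \<in> e" "u \<noteq> v" for e u v
    using assms(2)[OF that] by auto
  ultimately show ?thesis unfolding L21_colouring_def by blast
qed

lemma L21_colouring_edgeD:
  assumes "L21_colouring V E f" "e \<in> E" "u \<in> e" "v \<in> e" "u \<in> V" "v \<in> V" "u \<noteq> v"
  shows "f u + 2 \<le> f v \<or> f v + 2 \<le> f u"
proof -
  have "2 \<le> \<bar>int (f u) - int (f v)\<bar>" using assms unfolding L21_colouring_def by blast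
  then show ?thesis by auto
qed

lemma L21_colouring_shared_neighbourD:
  assumes "L21_colouring V E f" "e1 \<in> E" "e2 \<in> E" "v \<in> e1" "u \<in> e2"
    and "u \<in> V" "v \<in> V" "u \<noteq> v" "(e1 \<inter> e2) - {u, v} \<noteq> {}"
  shows "f u \<noteq> f v"
proof -
  have "1 \<le> \<bar>int (f u) - int (f v)\<bar>" using assms unfolding L21_colouring_def by blast
  then show ?thesis by auto
qed

lemma lambda_L21_eqI:
  assumes "L21_colouring V E f" "span V f = s"
    and "\<And>f. L21_colouring V E f \<Longrightarrow> s \<le> span V f"
  shows "lambda_L21 V E = s"
  unfolding lambda_L21_def by (rule Least_equality) (use assms in auto)

locale star_with_centre =
  fixes V :: "'a set" and E :: "'a set set" and C :: "'a set" and r c m :: nat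
  assumes finite_E: "finite E" and card_E: "card E = m" and two_le_m: "2 \<le> m"
    and finite_C: "finite C" and card_C: "card C = c" and one_le_c: "1 \<le> c" and c_less_r: "c < r"
    and edge_card: "\<And>e. e \<in> E \<Longrightarrow> finite e \<and> card e = r"
    and edge_inter: "\<And>e1 e2. e1 \<in> E \<Longrightarrow> e2 \<in> E \<Longrightarrow> e1 \<noteq> e2 \<Longrightarrow> e1 \<inter> e2 = C"
    and V_eq: "V = \<Union>E"
begin

lemma centre_subset_edge:
  assumes "e \<in> E" shows "C \<subseteq> e"
proof -
  have "card (E - {e}) = m - 1" using card_E assms finite_E by simp
  then have "E - {e} \<noteq> {}" using two_le_m by fastforce
  then obtain e' where "e' \<in> E" "e' \<noteq> e" by blast
  then show ?thesis using edge_inter[of e e'] assms by auto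
qed

lemma finite_V: "finite V"
  using V_eq finite_E edge_card by auto

lemma E_nonempty: "E \<noteq> {}"
  using card_E two_le_m by auto

lemma centre_subset_V: "C \<subseteq> V"
  using centre_subset_edge V_eq E_nonempty by blast

lemma noncentre_vertex_exists: "\<exists>w\<in>V. w \<notin> C"
proof -
  obtain e where e: "e \<in> E" using E_nonempty by blast
  have "card C < card e" using edge_card[OF e] card_C c_less_r by simp
  then have "\<not> e \<subseteq> C" using card_mono[OF finite_C] by (meson not_le)
  then show ?thesis using e V_eq by blast
qed

lemma edge_unique: "e \<in> E \<Longrightarrow> e' \<in> E \<Longrightarrow> v \<in> e \<Longrightarrow> v \<in> e' \<Longrightarrow> v \<notin> C \<Longrightarrow> e = e'"
  using edge_inter[of e e'] by blast

lemma card_V: "card V = c + m * (r - c)"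
proof -
  have V: "V = C \<union> (\<Union>e\<in>E. e - C)" using V_eq centre_subset_V by blast
  have "card (\<Union>e\<in>E. e - C) = (\<Sum>e\<in>E. card (e - C))"
    by (rule card_UN_disjoint) (use finite_E edge_card edge_inter in auto)
  also have "\<dots> = (\<Sum>e\<in>E. r - c)"
    by (rule sum.cong) (auto simp: card_Diff_subset[OF finite_C centre_subset_edge] edge_card card_C)
  also have "\<dots> = m * (r - c)" using card_E by simp
  finally show ?thesis
    unfolding V using card_Un_disjoint[of C "\<Union>e\<in>E. e - C"] finite_C finite_E edge_card card_C
    by auto
qed

lemma colouring_inj_on:
  assumes f: "L21_colouring V E f" shows "inj_on f V"
proof (rule inj_onI, rule ccontr)
  fix u v assume u: "u \<in> V" and v: "v \<in> V" and "f u = f v" "u \<noteq> v"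
  show False
  proof (cases "\<exists>e\<in>E. u \<in> e \<and> v \<in> e")
    case True
    then show False using L21_colouring_edgeD[OF f _ _ _ u v \<open>u \<noteq> v\<close>] \<open>f u = f v\<close> by auto
  next
    case False
    obtain e1 e2 where e: "e1 \<in> E" "e2 \<in> E" "v \<in> e1" "u \<in> e2" using u v V_eq by blast
    have "u \<notin> C" "v \<notin> C" "e1 \<noteq> e2" using False e centre_subset_edge by blast+
    \<comment> \<open>u and v then have the whole (nonempty) centre as common neighbours\<close>
    then have "(e1 \<inter> e2) - {u, v} \<noteq> {}" using edge_inter[OF e(1,2)] card_C one_le_c by auto
    then show False
      using L21_colouring_shared_neighbourD[OF f e u v \<open>u \<noteq> v\<close>] \<open>f u = f v\<close> by blast
  qed
qed

lemma colouring_centre_isolated: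
  assumes f: "L21_colouring V E f" and x: "x \<in> C" and v: "v \<in> V" "v \<noteq> x"
  shows "f x + 2 \<le> f v \<or> f v + 2 \<le> f x"
proof -
  obtain e where "e \<in> E" "v \<in> e" using v V_eq by blast
  then show ?thesis
    using L21_colouring_edgeD[OF f, of e x v] centre_subset_edge x v centre_subset_V by blast
qed

lemma span_lower_bound:
  assumes f: "L21_colouring V E f"
  shows "m * (r - c) + 2 * c - 1 \<le> span V f"
proof -
  obtain w where w: "w \<in> V" "w \<notin> C" using noncentre_vertex_exists by blast
  have inj: "inj_on f V" using colouring_inj_on[OF f] .
  have "card (f ` V) + card (f ` C) \<le> Suc (Max (f ` V)) - Min (f ` V)"
  proof (rule card_add_card_isolated_le)
    show "f w \<notin> f ` C" using inj w centre_subset_V by (auto dest: inj_onD)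
    show "\<And>t s. t \<in> f ` C \<Longrightarrow> s \<in> f ` V \<Longrightarrow> s \<noteq> t \<Longrightarrow> t + 2 \<le> s \<or> s + 2 \<le> t"
      using colouring_centre_isolated[OF f] by blast
  qed (use finite_V centre_subset_V w in auto)
  moreover have "card (f ` V) = c + m * (r - c)" "card (f ` C) = c"
    using card_image[OF inj] card_image[OF inj_on_subset[OF inj centre_subset_V]] card_V card_C
    by auto
  ultimately show ?thesis unfolding span_def by linarith
qed

definition edge_of :: "'a \<Rightarrow> 'a set" where
  "edge_of v = (THE e. e \<in> E \<and> v \<in> e)"

lemma edge_of_eq:
  assumes "e \<in> E" "v \<in> e" "v \<notin> C" shows "edge_of v = e"
  unfolding edge_of_def
proof (rule the_equality)
  show "\<And>e'. e' \<in> E \<and> v \<in> e' \<Longrightarrow> e' = e" using edge_unique assms by blast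
qed (use assms in blast)

lemma noncentre_labelling_exists:
  "\<exists>k. inj_on k (V - C) \<and> (\<forall>v\<in>V - C. k v < m * (r - c)) \<and>
       (\<forall>e\<in>E. \<forall>u\<in>e - C. \<forall>v\<in>e - C. u \<noteq> v \<longrightarrow> k u + m \<le> k v \<or> k v + m \<le> k u)"
proof -
  obtain idx where idx: "bij_betw idx E {0..<m}"
    using ex_bij_betw_finite_nat[OF finite_E] unfolding card_E by blast
  have "\<exists>p. bij_betw p (e - C) {0..<r - c}" if e: "e \<in> E" for e
  proof -
    have "card (e - C) = r - c"
      using card_Diff_subset[OF finite_C centre_subset_edge[OF e]] edge_card[OF e] card_C by simp
    then show ?thesis using ex_bij_betw_finite_nat[of "e - C"] edge_card[OF e] by auto
  qed
  then obtain pos where pos: "\<And>e. e \<in> E \<Longrightarrow> bij_betw (pos e) (e - C) {0..<r - c}" by metis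
  \<comment> \<open>the label of v is (position of v in its edge) * m + (index of its edge), so vertices of one
    edge are congruent mod m and those of different edges are not\<close>
  define k where "k v = pos (edge_of v) v * m + idx (edge_of v)" for v
  have idx_less: "idx e < m" if "e \<in> E" for e using idx that by (auto simp: bij_betw_def)
  have in_edge: "edge_of v \<in> E" "v \<in> edge_of v - C" if "v \<in> V - C" for v
    using that edge_of_eq V_eq by auto
  have k_mod: "k v mod m = idx (edge_of v)" and k_div: "k v div m = pos (edge_of v) v"
    if "v \<in> V - C" for v using idx_less[OF in_edge(1)[OF that]] by (simp_all add: k_def)
  have "inj_on k (V - C)"
  proof (rule inj_onI)
    fix u v assume u: "u \<in> V - C" and v: "v \<in> V - C" and "k u = k v"
    then have "edge_of u = edge_of v" using k_mod idx in_edge by (metis bij_betw_def inj_onD)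
    then show "u = v" using k_div \<open>k u = k v\<close> pos in_edge u v by (metis bij_betw_def inj_onD)
  qed
  moreover have "k v < m * (r - c)" if v: "v \<in> V - C" for v
  proof -
    have "k v < Suc (pos (edge_of v) v) * m" using idx_less in_edge[OF v] by (simp add: k_def)
    also have "\<dots> \<le> (r - c) * m"
      using bij_betw_apply[OF pos[OF in_edge(1)[OF v]] in_edge(2)[OF v]] by (intro mult_le_mono1) simp
    finally show ?thesis by (simp add: mult.commute)
  qed
  moreover have "k u + m \<le> k v \<or> k v + m \<le> k u"
    if e: "e \<in> E" and uv: "u \<in> e - C" "v \<in> e - C" "u \<noteq> v" for e u v
  proof -
    have "pos e u \<noteq> pos e v" using pos[OF e] uv by (auto simp: bij_betw_def inj_on_def)
    then have "pos e u * m + m \<le> pos e v * m \<or> pos e v * m + m \<le> pos e u * m"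
      by (metis add.commute linorder_neqE_nat mult_Suc mult_le_mono1 Suc_leI)
    then show ?thesis using edge_of_eq[OF e] uv by (auto simp: k_def)
  qed
  ultimately show ?thesis by blast
qed

lemma optimal_colouring_exists:
  "\<exists>f. L21_colouring V E f \<and> span V f \<le> m * (r - c) + 2 * c - 1"
proof -
  obtain k where k_inj: "inj_on k (V - C)" and k_less: "\<And>v. v \<in> V - C \<Longrightarrow> k v < m * (r - c)"
    and k_gap: "\<And>e u v. e \<in> E \<Longrightarrow> u \<in> e - C \<Longrightarrow> v \<in> e - C \<Longrightarrow> u \<noteq> v \<Longrightarrow>
                  k u + m \<le> k v \<or> k v + m \<le> k u"
    using noncentre_labelling_exists by blast
  obtain idx where idx: "bij_betw idx C {0..<c}"
    using ex_bij_betw_finite_nat[OF finite_C] unfolding card_C by blast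
  define f where "f v = (if v \<in> C then m * (r - c) + 2 * idx v + 1 else k v)" for v
  have centre_gap: "f u + 2 \<le> f v \<or> f v + 2 \<le> f u" if "u \<in> C" "v \<in> V" "u \<noteq> v" for u v
  proof (cases "v \<in> C")
    case True
    then have "idx u \<noteq> idx v" using idx that by (auto simp: bij_betw_def inj_on_def)
    then show ?thesis using that True by (auto simp: f_def)
  next
    case False
    then show ?thesis using k_less[of v] that by (auto simp: f_def)
  qed
  have gap: "f u + 2 \<le> f v \<or> f v + 2 \<le> f u"
    if "e \<in> E" "u \<in> e" "v \<in> e" "u \<noteq> v" for e u v
  proof -
    have "u \<in> V" "v \<in> V" using that V_eq by blast+
    then show ?thesis
      using centre_gap[of u v] centre_gap[of v u] k_gap[OF that(1) _ _ that(4)] two_le_m that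
      by (cases "u \<in> C \<or> v \<in> C") (auto simp: f_def)
  qed
  have "inj_on f V"
  proof (rule inj_onI)
    fix u v assume "u \<in> V" "v \<in> V" "f u = f v"
    then show "u = v"
      using centre_gap[of u v] centre_gap[of v u] inj_onD[OF k_inj, of u v]
      by (auto simp: f_def split: if_splits)
  qed
  then have col: "L21_colouring V E f" using gap by (rule L21_colouringI)
  have "f v \<le> m * (r - c) + 2 * c - 1" if "v \<in> V" for v
  proof (cases "v \<in> C")
    case True
    then show ?thesis using bij_betw_apply[OF idx True] by (simp add: f_def)
  next
    case False
    then show ?thesis using k_less[of v] that by (simp add: f_def)
  qed
  then have "Max (f ` V) \<le> m * (r - c) + 2 * c - 1"
    using finite_V centre_subset_V card_C one_le_c by (subst Max_le_iff) auto
  then show ?thesis using col unfolding span_def by (intro exI[of _ f]) simp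
qed

end

lemma star_hypergraph_obtains_centre:
  assumes "star_hypergraph r c m V E" "2 \<le> m" "1 \<le> c" "c < r"
  obtains C where "star_with_centre V E C r c m"
proof -
  from assms(1) obtain C where "card C = c" "finite C"
      "\<forall>e1\<in>E. \<forall>e2\<in>E. e1 \<noteq> e2 \<longrightarrow> e1 \<inter> e2 = C"
    and "uniform_hypergraph r V E" "V = \<Union>E" "finite E" "card E = m"
    unfolding star_hypergraph_def by blast
  then have "star_with_centre V E C r c m"
    using assms(2-4) by unfold_locales (auto simp: uniform_hypergraph_def)
  then show ?thesis by (rule that)
qed

theorem lemma3p9:
  fixes V :: "'a set" and E :: "'a set set" and r c m :: nat
  assumes "star_hypergraph r c m V E"
    and "m \<ge> 2" and "1 \<le> c" and "c < r"
  shows "lambda_L21 V E = m * (r - c) + 2 * c - 1"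
proof -
  obtain C where "star_with_centre V E C r c m"
    using star_hypergraph_obtains_centre assms by blast
  then interpret star_with_centre V E C r c m .
  obtain f where f: "L21_colouring V E f" "span V f \<le> m * (r - c) + 2 * c - 1"
    using optimal_colouring_exists by blast
  show ?thesis
  proof (rule lambda_L21_eqI[OF f(1)])
    show "span V f = m * (r - c) + 2 * c - 1" using f span_lower_bound by (meson le_antisym)
  qed (rule span_lower_bound)
qed

end
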